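(* Let $D$ be a drawing in $[0,a]\times[0,b]$ whose nodes are all of the eleven types listed in the context, let $\ell$ be its number of segments, and write $N_\ast$ for the number of nodes of type $\ast$. Then (i) $2\ell=(N_{VE}+N_{VX}+2N_{VT}+3N_{VS}+3N_{VC})+(N_{HE}+N_{HX}+2N_{HT}+3N_{HS}+3N_{HC})+4N_{CR}$; (ii) $N_{VE}+N_{HS}+N_{HT}=N_{VX}+N_{HC}+N_{VT}$ and $N_{HE}+N_{VS}+N_{VT}=N_{HX}+N_{VC}+N_{HT}$.
   Context: A drawing in the box $[0,a]\times[0,b]$ is a finite collection of weighted segments $((x_-,y_-),(x_+,y_+),s)$, each vertical ($x_-=x_+$, $y_-<y_+$, traversed upward) or horizontal ($y_-=y_+$, $x_-<x_+$, traversed rightward), with real intensity $s$, whose endpoints are nodes, satisfying Kirchhoff's law at every interior node (sum of intensities of segments entering from south and west equals sum of those leaving to north and east). Node types: vertical entry (VE): a point $(x,0)$ where a vertical segment starts; vertical exit (VX): a point $(x,b)$ where a vertical segment ends; vertical split (VS): a point where exactly three segments meet, from the south, to the north and to the east; vertical turn (VT): a point where exactly a segment from the south and a segment to the east meet; vertical coalescence (VC): exactly three segments from the west, from the south and to the north; horizontal entry (HE): a point $(0,y)$ where a horizontal segment starts; horizontal exit (HX): a point $(a,y)$ where a horizontal segment ends; horizontal split (HS): exactly three segments, from the west, to the east and to the north; horizontal turn (HT): exactly a segment from the west and a segment to the north; horizontal coalescence (HC): exactly three segments, from the south, from the west and to the east; crossing (CR): four segments meeting (from west, from south, to north, to east).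 *)

theory Defs
  imports Complex_Main
begin

type_synonym pt = "real \<times> real"
type_synonym seg = "pt \<times> pt \<times> real"

definition src :: "seg \<Rightarrow> pt" where "src \<sigma> = fst \<sigma>"
definition tgt :: "seg \<Rightarrow> pt" where "tgt \<sigma> = fst (snd \<sigma>)"
definition intensity :: "seg \<Rightarrow> real" where "intensity \<sigma> = snd (snd \<sigma>)"

definition vert :: "seg \<Rightarrow> bool" where
  "vert \<sigma> \<longleftrightarrow> fst (src \<sigma>) = fst (tgt \<sigma>) \<and> snd (src \<sigma>) < snd (tgt \<sigma>)"
definition horiz :: "seg \<Rightarrow> bool" where
  "horiz \<sigma> \<longleftrightarrow> snd (src \<sigma>) = snd (tgt \<sigma>) \<and> fst (src \<sigma>) < fst (tgt \<sigma>)"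

definition in_box :: "real \<Rightarrow> real \<Rightarrow> pt \<Rightarrow> bool" where
  "in_box a b p \<longleftrightarrow> 0 \<le> fst p \<and> fst p \<le> a \<and> 0 \<le> snd p \<and> snd p \<le> b"

definition interior :: "real \<Rightarrow> real \<Rightarrow> pt \<Rightarrow> bool" where
  "interior a b p \<longleftrightarrow> 0 < fst p \<and> fst p < a \<and> 0 < snd p \<and> snd p < b"

definition nodes :: "seg set \<Rightarrow> pt set" where
  "nodes D = src ` D \<union> tgt ` D"

definition from_south :: "seg set \<Rightarrow> pt \<Rightarrow> seg set" where
  "from_south D p = {\<sigma>\<in>D. vert \<sigma> \<and> tgt \<sigma> = p}"
definition to_north :: "seg set \<Rightarrow> pt \<Rightarrow> seg set" where
  "to_north D p = {\<sigma>\<in>D. vert \<sigma> \<and> src \<sigma> = p}"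
definition from_west :: "seg set \<Rightarrow> pt \<Rightarrow> seg set" where
  "from_west D p = {\<sigma>\<in>D. horiz \<sigma> \<and> tgt \<sigma> = p}"
definition to_east :: "seg set \<Rightarrow> pt \<Rightarrow> seg set" where
  "to_east D p = {\<sigma>\<in>D. horiz \<sigma> \<and> src \<sigma> = p}"

definition drawing :: "real \<Rightarrow> real \<Rightarrow> seg set \<Rightarrow> bool" where
  "drawing a b D \<longleftrightarrow> finite D \<and>
     (\<forall>\<sigma>\<in>D. (vert \<sigma> \<or> horiz \<sigma>) \<and> in_box a b (src \<sigma>) \<and> in_box a b (tgt \<sigma>)) \<and>
     (\<forall>p\<in>nodes D. interior a b p \<longrightarrow>
        (\<Sum>\<sigma>\<in>from_south D p. intensity \<sigma>) + (\<Sum>\<sigma>\<in>from_west D p. intensity \<sigma>)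
      = (\<Sum>\<sigma>\<in>to_north D p. intensity \<sigma>) + (\<Sum>\<sigma>\<in>to_east D p. intensity \<sigma>))"

datatype ntype = VE | VX | VS | VT | VC | HE | HX | HS | HT | HC | CR

definition pattern :: "seg set \<Rightarrow> pt \<Rightarrow> nat \<Rightarrow> nat \<Rightarrow> nat \<Rightarrow> nat \<Rightarrow> bool" where
  "pattern D p s w n e \<longleftrightarrow> card (from_south D p) = s \<and> card (from_west D p) = w \<and>
     card (to_north D p) = n \<and> card (to_east D p) = e"

fun has_type :: "real \<Rightarrow> real \<Rightarrow> seg set \<Rightarrow> pt \<Rightarrow> ntype \<Rightarrow> bool" where
  "has_type a b D p VE \<longleftrightarrow> snd p = 0 \<and> pattern D p 0 0 1 0"
| "has_type a b D p VX \<longleftrightarrow> snd p = b \<and> pattern D p 1 0 0 0"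
| "has_type a b D p VS \<longleftrightarrow> pattern D p 1 0 1 1"
| "has_type a b D p VT \<longleftrightarrow> pattern D p 1 0 0 1"
| "has_type a b D p VC \<longleftrightarrow> pattern D p 1 1 1 0"
| "has_type a b D p HE \<longleftrightarrow> fst p = 0 \<and> pattern D p 0 0 0 1"
| "has_type a b D p HX \<longleftrightarrow> fst p = a \<and> pattern D p 0 1 0 0"
| "has_type a b D p HS \<longleftrightarrow> pattern D p 0 1 1 1"
| "has_type a b D p HT \<longleftrightarrow> pattern D p 0 1 1 0"
| "has_type a b D p HC \<longleftrightarrow> pattern D p 1 1 0 1"
| "has_type a b D p CR \<longleftrightarrow> pattern D p 1 1 1 1"

definition num_type :: "real \<Rightarrow> real \<Rightarrow> seg set \<Rightarrow> ntype \<Rightarrow> nat" where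
  "num_type a b D t = card {p\<in>nodes D. has_type a b D p t}"

end

theory Submission
  imports Defs
begin

text \<open>
  Double counting. Every vertical segment leaves exactly one node to the north and enters
  exactly one node from the south, and likewise every horizontal segment leaves one node to
  the east and enters one from the west. The type of a node fixes how many segments it has in
  each of the four directions, so each of these four counts is a linear combination of the
  numbers of nodes of each type. Adding all four gives (i); equating the two counts of the
  vertical and of the horizontal segments gives (ii).
\<close>

lemma UNIV_ntype: "(UNIV :: ntype set) = {VE, VX, VS, VT, VC, HE, HX, HS, HT, HC, CR}"
  using ntype.exhaust by auto

lemma finite_UNIV_ntype: "finite (UNIV :: ntype set)"
  by (simp add: UNIV_ntype)

fun south_degree :: "ntype \<Rightarrow> nat" where
  "south_degree VE = 0" | "south_degree VX = 1" | "south_degree VS = 1" | "south_degree VT = 1"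
| "south_degree VC = 1" | "south_degree HE = 0" | "south_degree HX = 0" | "south_degree HS = 0"
| "south_degree HT = 0" | "south_degree HC = 1" | "south_degree CR = 1"

fun west_degree :: "ntype \<Rightarrow> nat" where
  "west_degree VE = 0" | "west_degree VX = 0" | "west_degree VS = 0" | "west_degree VT = 0"
| "west_degree VC = 1" | "west_degree HE = 0" | "west_degree HX = 1" | "west_degree HS = 1"
| "west_degree HT = 1" | "west_degree HC = 1" | "west_degree CR = 1"

fun north_degree :: "ntype \<Rightarrow> nat" where
  "north_degree VE = 1" | "north_degree VX = 0" | "north_degree VS = 1" | "north_degree VT = 0"
| "north_degree VC = 1" | "north_degree HE = 0" | "north_degree HX = 0" | "north_degree HS = 1"
| "north_degree HT = 1" | "north_degree HC = 0" | "north_degree CR = 1"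

fun east_degree :: "ntype \<Rightarrow> nat" where
  "east_degree VE = 0" | "east_degree VX = 0" | "east_degree VS = 1" | "east_degree VT = 1"
| "east_degree VC = 0" | "east_degree HE = 1" | "east_degree HX = 0" | "east_degree HS = 1"
| "east_degree HT = 0" | "east_degree HC = 1" | "east_degree CR = 1"

lemma has_type_pattern:
  "has_type a b D p t \<Longrightarrow>
     pattern D p (south_degree t) (west_degree t) (north_degree t) (east_degree t)"
  by (cases t) auto

lemma has_type_unique:
  assumes "has_type a b D p t" and "has_type a b D p t'"
  shows "t = t'"
  using has_type_pattern[OF assms(1)] has_type_pattern[OF assms(2)]
  by (cases t; cases t') (auto simp: pattern_def)

lemma card_eq_sum_card_fibres:
  assumes "finite A" and "finite B" and "f ` A \<subseteq> B"
  shows "card A = (\<Sum>y\<in>B. card {x\<in>A. f x = y})"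
  using sum.group[OF assms, of "\<lambda>_. 1 :: nat"] by simp

lemma sum_nodes_by_type:
  assumes fin: "finite (nodes D)"
    and typed: "\<forall>p\<in>nodes D. \<exists>t. has_type a b D p t"
    and h: "\<And>p t. p \<in> nodes D \<Longrightarrow> has_type a b D p t \<Longrightarrow> h p = c t"
  shows "(\<Sum>p\<in>nodes D. h p) = (\<Sum>t\<in>UNIV. c t * num_type a b D t)"
proof -
  define nodes_of where "nodes_of t = {p\<in>nodes D. has_type a b D p t}" for t
  have "nodes D = (\<Union>t\<in>UNIV. nodes_of t)"
    using typed by (auto simp: nodes_of_def)
  then have "(\<Sum>p\<in>nodes D. h p) = (\<Sum>p\<in>(\<Union>t\<in>UNIV. nodes_of t). h p)"
    by simp
  also have "\<dots> = (\<Sum>t\<in>UNIV. \<Sum>p\<in>nodes_of t. h p)"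
    using fin finite_UNIV_ntype has_type_unique
    by (intro sum.UNION_disjoint) (auto simp: nodes_of_def)
  also have "\<dots> = (\<Sum>t\<in>UNIV. \<Sum>p\<in>nodes_of t. c t)"
    by (intro sum.cong refl) (simp add: h nodes_of_def)
  finally show ?thesis
    by (simp add: nodes_of_def num_type_def mult.commute)
qed

lemma card_segments_by_type:
  assumes "drawing a b D" and typed: "\<forall>p\<in>nodes D. \<exists>t. has_type a b D p t"
  shows "card {\<sigma>\<in>D. vert \<sigma>} = (\<Sum>t\<in>UNIV. north_degree t * num_type a b D t)"
    and "card {\<sigma>\<in>D. vert \<sigma>} = (\<Sum>t\<in>UNIV. south_degree t * num_type a b D t)"
    and "card {\<sigma>\<in>D. horiz \<sigma>} = (\<Sum>t\<in>UNIV. east_degree t * num_type a b D t)"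
    and "card {\<sigma>\<in>D. horiz \<sigma>} = (\<Sum>t\<in>UNIV. west_degree t * num_type a b D t)"
proof -
  have fin: "finite D" and fin_nodes: "finite (nodes D)"
    using assms(1) by (simp_all add: drawing_def nodes_def)
  have by_src: "card {\<sigma>\<in>D. P \<sigma>} = (\<Sum>p\<in>nodes D. card {\<sigma>\<in>D. P \<sigma> \<and> src \<sigma> = p})"
    and by_tgt: "card {\<sigma>\<in>D. P \<sigma>} = (\<Sum>p\<in>nodes D. card {\<sigma>\<in>D. P \<sigma> \<and> tgt \<sigma> = p})" for P
    using card_eq_sum_card_fibres[OF _ fin_nodes, of "{\<sigma>\<in>D. P \<sigma>}"] fin
    by (simp_all add: nodes_def image_subset_iff)
  note by_type = sum_nodes_by_type[OF fin_nodes typed]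
  show "card {\<sigma>\<in>D. vert \<sigma>} = (\<Sum>t\<in>UNIV. north_degree t * num_type a b D t)"
    unfolding by_src[of vert]
    by (rule by_type) (auto dest: has_type_pattern simp: pattern_def to_north_def)
  show "card {\<sigma>\<in>D. vert \<sigma>} = (\<Sum>t\<in>UNIV. south_degree t * num_type a b D t)"
    unfolding by_tgt[of vert]
    by (rule by_type) (auto dest: has_type_pattern simp: pattern_def from_south_def)
  show "card {\<sigma>\<in>D. horiz \<sigma>} = (\<Sum>t\<in>UNIV. east_degree t * num_type a b D t)"
    unfolding by_src[of horiz]
    by (rule by_type) (auto dest: has_type_pattern simp: pattern_def to_east_def)
  show "card {\<sigma>\<in>D. horiz \<sigma>} = (\<Sum>t\<in>UNIV. west_degree t * num_type a b D t)"
    unfolding by_tgt[of horiz]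
    by (rule by_type) (auto dest: has_type_pattern simp: pattern_def from_west_def)
qed

lemma card_drawing_vert_horiz:
  assumes "drawing a b D"
  shows "card D = card {\<sigma>\<in>D. vert \<sigma>} + card {\<sigma>\<in>D. horiz \<sigma>}"
proof -
  have "D = {\<sigma>\<in>D. vert \<sigma>} \<union> {\<sigma>\<in>D. horiz \<sigma>}"
    using assms by (auto simp: drawing_def)
  moreover have "{\<sigma>\<in>D. vert \<sigma>} \<inter> {\<sigma>\<in>D. horiz \<sigma>} = {}"
    by (auto simp: vert_def horiz_def)
  moreover have "finite D"
    using assms by (simp add: drawing_def)
  ultimately show ?thesis
    by (metis (no_types, lifting) card_Un_disjoint finite_Un)
qed

theorem lemma1:
  fixes a b :: real and D :: "seg set"
  assumes "drawing a b D"
    and "\<forall>p\<in>nodes D. \<exists>t. has_type a b D p t"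
  shows "(2 * card D =
      (num_type a b D VE + num_type a b D VX + 2 * num_type a b D VT
         + 3 * num_type a b D VS + 3 * num_type a b D VC)
    + (num_type a b D HE + num_type a b D HX + 2 * num_type a b D HT
         + 3 * num_type a b D HS + 3 * num_type a b D HC)
    + 4 * num_type a b D CR)
    \<and> (num_type a b D VE + num_type a b D HS + num_type a b D HT
       = num_type a b D VX + num_type a b D HC + num_type a b D VT)
    \<and> (num_type a b D HE + num_type a b D VS + num_type a b D VT
       = num_type a b D HX + num_type a b D VC + num_type a b D HT)"
  using card_drawing_vert_horiz[OF assms(1)] card_segments_by_type[OF assms]
  by (simp add: UNIV_ntype)

end
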